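(* Let $1\le a\le\sqrt3$ and $c(a)=\frac98(a+\frac1a)$. For $K>c(a)^2/9$ let $C_{K}$ be the closed curve $\{M\in\mathbb{R}^3: aM_1^2+\frac1aM_2^2-3M_3-c(a)=0,\ M_1^2+M_2^2+M_3^2=K\}$, let $M(t)=(M_1(t),M_2(t),M_3(t))$ be a periodic solution of $$\dot M_1=-\tfrac1aM_2M_3-\tfrac32M_2,\quad \dot M_2=aM_1M_3+\tfrac32M_1,\quad \dot M_3=\left(\tfrac1a-a\right)M_1M_2$$ traversing $C_K$, with period $T(K,a)$, let $D(K,a)$ be the part of the sphere $M_1^2+M_2^2+M_3^2=K$ below $C_K$ (the component of the sphere minus $C_K$ containing $(0,0,-\sqrt K)$), and define the Berry phase $$\Delta\theta(K,a)=\frac1{\sqrt K}\int_0^{T(K,a)}\left(\tfrac32M_3(t)+c(a)\right)dt+\mathrm{Area}(D(K,a)).$$ Then $$\lim_{K\to c(a)^2/9+0}\Delta\theta(K,a)=\frac{8a\pi}{\sqrt{3-a^2}\sqrt{3a^2-1}},$$ where for $a=\sqrt3$ the right-hand side is read as $+\infty$.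
   Context: For $1\le a\le\sqrt3$ and $K>c(a)^2/9$, the intersection $C_K$ of the paraboloid and the sphere is a single closed curve surrounding the $M_3$-axis, and every solution of the stated system starting on $C_K$ is periodic and traverses $C_K$; $T(K,a)$ denotes its period. This system is the Lie–Poisson equation (with $M_4=1$) for the Fefferman metric of $\mathrm{SU}(2)$ with left-invariant CR structure $\mathbb{C}(e_1-\frac ia e_2)$, and $\Delta\theta$ is the Berry phase of the corresponding chain. Area is the standard surface area in $\mathbb{R}^3$. *)

theory Defs
  imports "HOL-Analysis.Analysis"
begin

definition cA :: "real \<Rightarrow> real" where
  "cA a = 9/8 * (a + 1/a)"

definition curveC :: "real \<Rightarrow> real \<Rightarrow> (real^3) set" where
  "curveC a K = {M. a * (M$1)^2 + (1/a) * (M$2)^2 - 3 * (M$3) - cA a = 0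
                  \<and> (M$1)^2 + (M$2)^2 + (M$3)^2 = K}"

definition fieldF :: "real \<Rightarrow> real^3 \<Rightarrow> real^3" where
  "fieldF a M = vector [ -(1/a) * M$2 * M$3 - 3/2 * M$2,
                          a * M$1 * M$3 + 3/2 * M$1,
                          (1/a - a) * M$1 * M$2 ]"

definition periodic_sol_on :: "real \<Rightarrow> real \<Rightarrow> (real \<Rightarrow> real^3) \<Rightarrow> real \<Rightarrow> bool" where
  "periodic_sol_on a K M T \<longleftrightarrow>
     (\<forall>t. (M has_vector_derivative fieldF a (M t)) (at t)) \<and>
     M 0 \<in> curveC a K \<and> 0 < T \<and> M T = M 0 \<and> (\<forall>s\<in>{0<..<T}. M s \<noteq> M 0)"

definition regionD :: "real \<Rightarrow> real \<Rightarrow> (real^3) set" where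
  "regionD a K = connected_component_set (sphere 0 (sqrt K) - curveC a K)
                    (vector [0, 0, - sqrt K])"

text \<open>Standard surface area of a subset S of the sphere of radius R, computed via
  the spherical-coordinate parametrisation r(th,ph) = R(sin ph cos th, sin ph sin th, cos ph),
  whose area element is |r_th x r_ph| = R^2 sin ph.\<close>
definition sphere_param :: "real \<Rightarrow> real \<times> real \<Rightarrow> real^3" where
  "sphere_param R p = vector [R * sin (snd p) * cos (fst p),
                              R * sin (snd p) * sin (fst p),
                              R * cos (snd p)]"

definition sphere_area :: "real \<Rightarrow> (real^3) set \<Rightarrow> real" where
  "sphere_area R S = integral ({0..2*pi} \<times> {0..pi})
      (\<lambda>p. indicator S (sphere_param R p) * R^2 * sin (snd p))"

definition berry_phase :: "real \<Rightarrow> real \<Rightarrow> (real \<Rightarrow> real^3) \<Rightarrow> real \<Rightarrow> real" where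
  "berry_phase a K M T =
     1 / sqrt K * integral {0..T} (\<lambda>t. 3/2 * (M t)$3 + cA a)
     + sphere_area (sqrt K) (regionD a K)"

end

theory Submission
  imports Defs
begin

text \<open>The sphere |M|^2 and the paraboloid are conserved, so a solution stays on C_K, and C_K
  shrinks to the south pole (0, 0, -cA a / 3) as K decreases to (cA a)^2 / 9. In the
  (M_1, M_2)-plane the flow rotates with coefficients M_3/a + 3/2 and a M_3 + 3/2, which at the
  pole equal alpha = 3 (3 a^2 - 1) / (8 a^2) and beta = 3 (3 - a^2) / 8. Bounding the angular
  velocity of the rescaled projection (lam M_1, M_2) on C_K from both sides bounds the period:
  over one period the angle grows by a positive multiple of 2 pi, and once it has grown by 2 pi
  the solution is back on its initial ray, hence at its initial point, as C_K meets each such ray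
  once. With lam = sqrt (beta / alpha) both bounds tend to sqrt (alpha beta), so T tends to
  2 pi / sqrt (alpha beta). Since M_3 tends to -cA a / 3, sqrt K to cA a / 3 and the area of D
  to 0, the Berry phase tends to (3 / cA a) (cA a / 2) T = 3 pi / sqrt (alpha beta). For
  a = sqrt 3, beta = 0, and with lam = sqrt (K - top^2) the upper bound on the angular velocity
  tends to 0, so the period and the Berry phase diverge.\<close>

section \<open>Angular motion of a planar path\<close>

lemma rotation_rate_identities:
  fixes x y x' y' c s :: real
  assumes "x^2 + y^2 \<noteq> 0"
  defines "\<omega> \<equiv> (x * y' - y * x') / (x^2 + y^2)" and "\<sigma> \<equiv> (x * x' + y * y') / (x^2 + y^2)"
  shows "x' * c + y' * s + (y * c - x * s) * \<omega> = \<sigma> * (x * c + y * s)"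
    and "y' * c - x' * s - (x * c + y * s) * \<omega> = \<sigma> * (y * c - x * s)"
proof -
  have "(x' * c + y' * s) * (x^2 + y^2) + (y * c - x * s) * (x * y' - y * x')
       = (x * x' + y * y') * (x * c + y * s)"
       "(y' * c - x' * s) * (x^2 + y^2) - (x * c + y * s) * (x * y' - y * x')
       = (x * x' + y * y') * (y * c - x * s)"
    by (simp_all add: algebra_simps power2_eq_square)
  then show "x' * c + y' * s + (y * c - x * s) * \<omega> = \<sigma> * (x * c + y * s)"
    and "y' * c - x' * s - (x * c + y * s) * \<omega> = \<sigma> * (y * c - x * s)"
    using assms by (simp_all add: field_simps)
qed

locale nonvanishing_planar_path =
  fixes X Y X' Y' :: "real \<Rightarrow> real"
  assumes X_deriv: "\<And>t. (X has_real_derivative X' t) (at t)"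
    and Y_deriv: "\<And>t. (Y has_real_derivative Y' t) (at t)"
    and continuous_X': "continuous_on UNIV X'"
    and continuous_Y': "continuous_on UNIV Y'"
    and nonvanishing: "\<And>t. 0 < X t ^ 2 + Y t ^ 2"
begin

definition angular_velocity :: "real \<Rightarrow> real" where
  "angular_velocity t = (X t * Y' t - Y t * X' t) / (X t ^ 2 + Y t ^ 2)"

definition radial_rate :: "real \<Rightarrow> real" where
  "radial_rate t = (X t * X' t + Y t * Y' t) / (X t ^ 2 + Y t ^ 2)"

definition angle :: "real \<Rightarrow> real" where
  "angle t = integral {0..t} angular_velocity"

definition radius :: "real \<Rightarrow> real" where
  "radius t = sqrt (X t ^ 2 + Y t ^ 2)"

lemma radius_pos: "0 < radius t"
  unfolding radius_def using nonvanishing by simp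

lemma radius_sq: "radius t ^ 2 = X t ^ 2 + Y t ^ 2"
  unfolding radius_def using nonvanishing[of t] by simp

lemma norm_sq_nonzero: "X t ^ 2 + Y t ^ 2 \<noteq> 0"
  using nonvanishing[of t] by linarith

lemma continuous_angular_velocity: "continuous_on UNIV angular_velocity"
proof -
  have "continuous_on UNIV X" "continuous_on UNIV Y"
    using X_deriv Y_deriv by (auto intro!: continuous_at_imp_continuous_on DERIV_isCont)
  then show ?thesis
    unfolding angular_velocity_def
    by (intro continuous_intros continuous_X' continuous_Y')
      (simp_all add: norm_sq_nonzero del: sum_power2_eq_zero_iff)
qed

lemma angular_velocity_integrable: "angular_velocity integrable_on {0..t}"
  by (rule integrable_continuous_real[OF continuous_on_subset[OF continuous_angular_velocity]]) simp

lemma angle_has_derivative: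
  "s \<in> {0..t} \<Longrightarrow> (angle has_real_derivative angular_velocity s) (at s within {0..t})"
  unfolding angle_def
  by (intro integral_has_real_derivative continuous_on_subset[OF continuous_angular_velocity]) auto

lemma radius_has_derivative: "(radius has_real_derivative radial_rate s * radius s) (at s within S)"
proof -
  have "((\<lambda>s. X s ^ 2 + Y s ^ 2) has_real_derivative 2 * (X s * X' s + Y s * Y' s)) (at s within S)"
    by (rule derivative_eq_intros has_field_derivative_at_within[OF X_deriv]
        has_field_derivative_at_within[OF Y_deriv] refl)+ simp
  from DERIV_chain2[OF DERIV_real_sqrt[OF nonvanishing] this]
  have "(radius has_real_derivative inverse (radius s) / 2 * (2 * (X s * X' s + Y s * Y' s)))
      (at s within S)"
    unfolding radius_def .
  moreover have "inverse (radius s) / 2 * (2 * (X s * X' s + Y s * Y' s)) = radial_rate s * radius s"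
    using radius_pos[of s] unfolding radial_rate_def radius_sq[symmetric]
    by (simp add: field_simps power2_eq_square)
  ultimately show ?thesis by simp
qed

lemma ratio_to_radius_constant:
  assumes "0 \<le> t"
    and f_deriv: "\<And>s. s \<in> {0..t} \<Longrightarrow> (f has_real_derivative radial_rate s * f s) (at s within {0..t})"
  shows "f t / radius t = f 0 / radius 0"
proof -
  have "((\<lambda>s. f s / radius s) has_real_derivative 0) (at s within {0..t})" if "s \<in> {0..t}" for s
    by (rule derivative_eq_intros f_deriv[OF that] radius_has_derivative refl)+
      (use radius_pos[of s] in \<open>simp_all add: field_simps\<close>)
  then obtain k where "\<forall>s\<in>{0..t}. f s / radius s = k"
    using has_field_derivative_zero_constant[of "{0..t}" "\<lambda>s. f s / radius s"] by auto
  then show ?thesis using assms(1) by auto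
qed

text \<open>Rotated back by its angle, the path moves only radially, at the same logarithmic rate
  as the radius.\<close>
lemma rotate_back_by_angle:
  assumes "0 \<le> t"
  shows "X t * cos (angle t) + Y t * sin (angle t) = radius t / radius 0 * X 0"
    and "Y t * cos (angle t) - X t * sin (angle t) = radius t / radius 0 * Y 0"
proof -
  note within = has_field_derivative_at_within[OF X_deriv] has_field_derivative_at_within[OF Y_deriv]
  have "(\<lambda>s. X s * cos (angle s) + Y s * sin (angle s)) t / radius t
      = (\<lambda>s. X s * cos (angle s) + Y s * sin (angle s)) 0 / radius 0"
  proof (rule ratio_to_radius_constant[OF assms])
    fix s assume s: "s \<in> {0..t}"
    have "((\<lambda>s. X s * cos (angle s) + Y s * sin (angle s)) has_real_derivative
        X' s * cos (angle s) + Y' s * sin (angle s)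
        + (Y s * cos (angle s) - X s * sin (angle s)) * angular_velocity s) (at s within {0..t})"
      by (rule derivative_eq_intros within angle_has_derivative[OF s] refl)+ (simp add: algebra_simps)
    then show "((\<lambda>s. X s * cos (angle s) + Y s * sin (angle s)) has_real_derivative
        radial_rate s * (X s * cos (angle s) + Y s * sin (angle s))) (at s within {0..t})"
      unfolding angular_velocity_def radial_rate_def rotation_rate_identities(1)[OF norm_sq_nonzero] .
  qed
  moreover have "(\<lambda>s. Y s * cos (angle s) - X s * sin (angle s)) t / radius t
      = (\<lambda>s. Y s * cos (angle s) - X s * sin (angle s)) 0 / radius 0"
  proof (rule ratio_to_radius_constant[OF assms])
    fix s assume s: "s \<in> {0..t}"
    have "((\<lambda>s. Y s * cos (angle s) - X s * sin (angle s)) has_real_derivative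
        Y' s * cos (angle s) - X' s * sin (angle s)
        - (X s * cos (angle s) + Y s * sin (angle s)) * angular_velocity s) (at s within {0..t})"
      by (rule derivative_eq_intros within angle_has_derivative[OF s] refl)+ (simp add: algebra_simps)
    then show "((\<lambda>s. Y s * cos (angle s) - X s * sin (angle s)) has_real_derivative
        radial_rate s * (Y s * cos (angle s) - X s * sin (angle s))) (at s within {0..t})"
      unfolding angular_velocity_def radial_rate_def rotation_rate_identities(2)[OF norm_sq_nonzero] .
  qed
  ultimately show "X t * cos (angle t) + Y t * sin (angle t) = radius t / radius 0 * X 0"
    "Y t * cos (angle t) - X t * sin (angle t) = radius t / radius 0 * Y 0"
    using radius_pos[of t] radius_pos[of 0] by (simp_all add: angle_def field_simps)
qed

lemma angle_of_closed_path:
  assumes "0 \<le> T" "X T = X 0" "Y T = Y 0"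
  shows "cos (angle T) = 1"
proof -
  have "radius T = radius 0" unfolding radius_def using assms by simp
  then have "X 0 * cos (angle T) + Y 0 * sin (angle T) = X 0"
    "Y 0 * cos (angle T) - X 0 * sin (angle T) = Y 0"
    using rotate_back_by_angle[OF assms(1)] radius_pos[of 0] assms(2,3) by simp_all
  then have "(X 0 ^ 2 + Y 0 ^ 2) * cos (angle T) = X 0 ^ 2 + Y 0 ^ 2"
    by (auto simp: algebra_simps power2_eq_square dest: arg_cong[where f = "\<lambda>z. X 0 * z"])
  then show ?thesis using norm_sq_nonzero[of 0] by simp blast
qed

lemma angle_ge:
  assumes "0 \<le> t" "\<And>s. lo \<le> angular_velocity s"
  shows "lo * t \<le> angle t"
proof -
  have "integral {0..t} (\<lambda>_. lo) \<le> angle t"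
    unfolding angle_def using assms(2)
    by (intro integral_le integrable_const_ivl angular_velocity_integrable)
  then show ?thesis using assms(1) by (simp add: mult.commute)
qed

lemma angle_le:
  assumes "0 \<le> t" "\<And>s. angular_velocity s \<le> hi"
  shows "angle t \<le> hi * t"
proof -
  have "angle t \<le> integral {0..t} (\<lambda>_. hi)"
    unfolding angle_def using assms(2)
    by (intro integral_le integrable_const_ivl angular_velocity_integrable)
  then show ?thesis using assms(1) by (simp add: mult.commute)
qed

lemma closed_path_time_ge:
  assumes "0 < T" "X T = X 0" "Y T = Y 0"
    and pos: "\<And>t. 0 < angular_velocity t" and le_hi: "\<And>t. angular_velocity t \<le> hi"
  shows "2 * pi \<le> T * hi"
proof -
  obtain n :: int where n: "angle T = n * (2 * pi)"
    using angle_of_closed_path[OF less_imp_le[OF assms(1)] assms(2,3)] cos_one_2pi_int by auto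
  have "integral {0..T} (\<lambda>_. 0) < angle T"
    unfolding angle_def using assms(1) pos
    by (intro integral_less_real continuous_on_const
        continuous_on_subset[OF continuous_angular_velocity]) auto
  then have "0 < n" using n by (simp add: zero_less_mult_iff)
  then have "2 * pi \<le> angle T" using n by simp
  also have "angle T \<le> hi * T" using angle_le[OF less_imp_le[OF assms(1)] le_hi] .
  finally show ?thesis by (simp add: mult.commute)
qed

lemma returns_to_initial_ray:
  assumes lo: "0 < lo" "\<And>t. lo \<le> angular_velocity t"
  obtains s \<mu> where "0 < s" "s \<le> 2 * pi / lo" "0 < \<mu>" "X s = \<mu> * X 0" "Y s = \<mu> * Y 0"
proof -
  define L where "L = 2 * pi / lo"
  have "0 < L" unfolding L_def using lo by simp
  have "2 * pi \<le> angle L"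
    using angle_ge[of L lo] lo \<open>0 < L\<close> by (simp add: L_def)
  moreover have "continuous_on {0..L} angle"
    unfolding angle_def by (rule indefinite_integral_continuous_1[OF angular_velocity_integrable])
  ultimately obtain s where s: "0 \<le> s" "s \<le> L" "angle s = 2 * pi"
    using IVT'[of angle 0 "2 * pi" L] \<open>0 < L\<close> by (auto simp: angle_def)
  then have "0 < s" by (cases "s = 0") (auto simp: angle_def)
  moreover have "X s = radius s / radius 0 * X 0" "Y s = radius s / radius 0 * Y 0"
    using rotate_back_by_angle[OF s(1)] s(3) by simp_all
  moreover have "0 < radius s / radius 0" using radius_pos[of s] radius_pos[of 0] by simp
  ultimately show ?thesis using that s(2) unfolding L_def by blast
qed

end

section \<open>Area on the sphere\<close>

lemma sphere_param_horizontal: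
  "(sphere_param R p $ 1)^2 + (sphere_param R p $ 2)^2 = (R * sin (snd p))^2"
proof -
  have "(sphere_param R p $ 1)^2 + (sphere_param R p $ 2)^2
      = (R * sin (snd p))^2 * (cos (fst p))^2 + (R * sin (snd p))^2 * (sin (fst p))^2"
    unfolding sphere_param_def by (simp add: power_mult_distrib)
  also have "\<dots> = (R * sin (snd p))^2 * ((cos (fst p))^2 + (sin (fst p))^2)"
    by (rule distrib_left[symmetric])
  finally show ?thesis by simp
qed

lemma sphere_area_nonneg: "0 \<le> sphere_area R S"
proof -
  have "0 \<le> indicator S (sphere_param R p) * R^2 * sin (snd p)" if "p \<in> {0..2*pi} \<times> {0..pi}" for p
    using that by (auto intro!: mult_nonneg_nonneg sin_ge_zero)
  then show ?thesis
    unfolding sphere_area_def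
    by (cases "(\<lambda>p. indicator S (sphere_param R p) * R^2 * sin (snd p)) integrable_on {0..2*pi} \<times> {0..pi}")
      (simp_all add: Henstock_Kurzweil_Integration.integral_nonneg not_integrable_integral)
qed

text \<open>Crude, but enough for regions that shrink to a pole: the area element
  R^2 sin ph = R (R sin ph) is at most R r on S.\<close>
lemma sphere_area_le_near_axis:
  assumes "0 \<le> R" "0 \<le> r" and near: "\<And>x. x \<in> S \<Longrightarrow> (x$1)^2 + (x$2)^2 \<le> r^2"
  shows "sphere_area R S \<le> 2 * pi^2 * R * r"
proof -
  define B where "B = ({0..2*pi} \<times> {0..pi} :: (real \<times> real) set)"
  define f where "f p = indicator S (sphere_param R p) * R^2 * sin (snd p)" for p
  have f_le: "f p \<le> R * r" if "p \<in> B" for p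
  proof (cases "sphere_param R p \<in> S")
    case True
    have "0 \<le> sin (snd p)" using that unfolding B_def by (auto intro!: sin_ge_zero)
    moreover have "(R * sin (snd p))^2 \<le> r^2"
      using near[OF True] unfolding sphere_param_horizontal .
    ultimately have "R * sin (snd p) \<le> r"
      using assms(1,2) by (simp add: power2_le_iff_abs_le)
    from mult_left_mono[OF this assms(1)] show ?thesis
      unfolding f_def using True by (simp add: power2_eq_square mult.assoc)
  qed (simp add: f_def assms)
  have B: "B = cbox (0, 0) (2*pi, pi)" unfolding B_def by (simp add: cbox_Pair_eq)
  show ?thesis
  proof (cases "f integrable_on B")
    case True
    then have "integral B f \<le> integral B (\<lambda>_. R * r)"
      using f_le by (intro integral_le) (auto simp: B)
    also have "\<dots> = 2 * pi^2 * R * r" unfolding B by (simp add: content_Pair power2_eq_square)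
    finally show ?thesis unfolding sphere_area_def f_def B_def .
  next
    case False
    then show ?thesis
      using assms unfolding sphere_area_def f_def B_def by (simp add: not_integrable_integral)
  qed
qed

section \<open>The curve C_K\<close>

lemma cA_pos: "0 < a \<Longrightarrow> 0 < cA a"
  unfolding cA_def by (simp add: add_pos_pos)

lemma above_critical_pos: "(cA a)^2 / 9 < K \<Longrightarrow> 0 < K"
  using divide_nonneg_pos[OF zero_le_power2[of "cA a"], of 9] by linarith

lemma cA_mult_le:
  assumes "1 \<le> a" "a \<le> sqrt 3"
  shows "a * cA a \<le> 9/2"
proof -
  have "a^2 \<le> (sqrt 3)^2" using assms by (intro power_mono) auto
  moreover have "a * cA a = 9/8 * (a^2 + 1)"
    using assms(1) unfolding cA_def by (simp add: field_simps power2_eq_square)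
  ultimately show ?thesis by simp
qed

lemma one_over_mult_le_mult:
  fixes a z :: real
  assumes "1 \<le> a" "0 \<le> z"
  shows "(1/a) * z \<le> a * z"
proof -
  have "1/a \<le> 1" using assms(1) by simp
  then have "1/a \<le> a" using assms(1) by linarith
  from mult_right_mono[OF this assms(2)] show ?thesis .
qed

text \<open>The larger root w of a (K - w^2) = 3 w + cA a, i.e. the height at which C_K crosses
  the plane M_2 = 0; this is the top of C_K.\<close>
definition top_height :: "real \<Rightarrow> real \<Rightarrow> real" where
  "top_height a K = (-3 + sqrt (9 + 4 * a * (a * K - cA a))) / (2 * a)"

lemma le_top_height:
  assumes "1 \<le> a" "u^2 + v^2 + w^2 = K" "0 \<le> a * u^2 + (1/a) * v^2 - 3 * w - cA a"
  shows "w \<le> top_height a K"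
proof -
  have "(1/a) * v^2 \<le> a * v^2" using one_over_mult_le_mult[OF assms(1)] by simp
  moreover have "a * (K - w^2) = a * u^2 + a * v^2"
    unfolding assms(2)[symmetric] by (simp add: algebra_simps)
  ultimately have "3 * w + cA a \<le> a * (K - w^2)"
    using assms(3) by linarith
  then have "4 * a * (3 * w + cA a) \<le> 4 * a * (a * (K - w^2))"
    using assms(1) by (intro mult_left_mono) auto
  then have "(2 * a * w + 3)^2 \<le> 9 + 4 * a * (a * K - cA a)"
    by (simp add: power2_eq_square algebra_simps)
  then have "2 * a * w + 3 \<le> sqrt (9 + 4 * a * (a * K - cA a))"
    by (rule real_le_rsqrt)
  then show ?thesis unfolding top_height_def using assms(1) by (simp add: field_simps)
qed

lemma top_height_gt:
  assumes "0 < a" "(cA a)^2 / 9 < K"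
  shows "- cA a / 3 < top_height a K"
proof -
  have "(3 - 2 * a * cA a / 3)^2 < 9 + 4 * a * (a * K - cA a)"
    using assms by (simp add: power2_eq_square field_simps)
  then have "3 - 2 * a * cA a / 3 < sqrt (9 + 4 * a * (a * K - cA a))"
    using real_less_rsqrt by fastforce
  then show ?thesis unfolding top_height_def using assms(1) by (simp add: field_simps)
qed

lemma top_height_tendsto:
  assumes "0 < a" "a * cA a \<le> 9/2"
  shows "(top_height a \<longlongrightarrow> - cA a / 3) (at_right ((cA a)^2 / 9))"
proof -
  have "9 + 4 * a * (a * ((cA a)^2 / 9) - cA a) = (3 - 2 * a * cA a / 3)^2"
    by (simp add: power2_eq_square field_simps)
  then have "sqrt (9 + 4 * a * (a * ((cA a)^2 / 9) - cA a)) = 3 - 2 * a * cA a / 3"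
    using assms(2) by simp
  then have "top_height a ((cA a)^2 / 9) = - cA a / 3"
    unfolding top_height_def using assms(1) by (simp add: field_simps)
  moreover have "continuous (at_right ((cA a)^2 / 9)) (top_height a)"
    unfolding top_height_def using assms(1) by (intro continuous_intros) auto
  ultimately show ?thesis by (simp add: continuous_within)
qed

lemma horizontal_radius_pos:
  assumes "0 < a" "(cA a)^2 / 9 < K" "top_height a K \<le> 0"
  shows "0 < K - (top_height a K)^2"
proof -
  have "(- top_height a K)^2 \<le> (cA a / 3)^2"
    using top_height_gt[OF assms(1,2)] assms(3) by (intro power_mono) auto
  then show ?thesis using assms(2) by (simp add: power_divide)
qed

lemma fieldF_flow_components:
  assumes flow: "\<And>t. (m has_vector_derivative fieldF a (m t)) (at t)"
  shows "((\<lambda>t. m t $ 1) has_real_derivative - (1/a) * m t $ 2 * m t $ 3 - 3/2 * m t $ 2) (at t)"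
    and "((\<lambda>t. m t $ 2) has_real_derivative a * m t $ 1 * m t $ 3 + 3/2 * m t $ 1) (at t)"
    and "((\<lambda>t. m t $ 3) has_real_derivative (1/a - a) * m t $ 1 * m t $ 2) (at t)"
proof -
  have "((\<lambda>t. m t $ i) has_real_derivative fieldF a (m t) $ i) (at t)" for i
    using bounded_linear.has_vector_derivative[OF bounded_linear_vec_nth flow]
    by (simp add: has_real_derivative_iff_has_vector_derivative)
  from this[of 1] this[of 2] this[of 3] show
    "((\<lambda>t. m t $ 1) has_real_derivative - (1/a) * m t $ 2 * m t $ 3 - 3/2 * m t $ 2) (at t)"
    "((\<lambda>t. m t $ 2) has_real_derivative a * m t $ 1 * m t $ 3 + 3/2 * m t $ 1) (at t)"
    "((\<lambda>t. m t $ 3) has_real_derivative (1/a - a) * m t $ 1 * m t $ 2) (at t)"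
    by (simp_all add: fieldF_def)
qed

lemma curveC_invariant:
  assumes flow: "\<And>t. (m has_vector_derivative fieldF a (m t)) (at t)"
    and "a \<noteq> 0" and "m 0 \<in> curveC a K"
  shows "m t \<in> curveC a K"
proof -
  note deriv = fieldF_flow_components[OF flow]
  have "((\<lambda>t. (m t$1)^2 + (m t$2)^2 + (m t$3)^2) has_real_derivative 0) (at t)" for t
    by (rule derivative_eq_intros deriv refl)+ (simp add: field_simps)
  then have "(m t$1)^2 + (m t$2)^2 + (m t$3)^2 = (m 0$1)^2 + (m 0$2)^2 + (m 0$3)^2"
    by (intro DERIV_isconst_all allI)
  moreover have "((\<lambda>t. a * (m t$1)^2 + (1/a) * (m t$2)^2 - 3 * (m t$3) - cA a)
      has_real_derivative 0) (at t)" for t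
    by (rule derivative_eq_intros deriv refl)+ (use \<open>a \<noteq> 0\<close> in \<open>simp add: field_simps\<close>)
  then have "a * (m t$1)^2 + (1/a) * (m t$2)^2 - 3 * (m t$3) - cA a
      = a * (m 0$1)^2 + (1/a) * (m 0$2)^2 - 3 * (m 0$3) - cA a"
    by (intro DERIV_isconst_all allI)
  ultimately show ?thesis using assms(3) unfolding curveC_def by simp
qed

lemma periodic_sol_on_curveC:
  assumes "periodic_sol_on a K m T" "a \<noteq> 0"
  shows "m t \<in> curveC a K"
  using assms curveC_invariant unfolding periodic_sol_on_def by blast

lemma curveC_height:
  assumes "M \<in> curveC a K" "1 \<le> a"
  shows "- cA a / 3 \<le> M$3" and "M$3 \<le> top_height a K"
proof -
  have "0 \<le> a * (M$1)^2 + (1/a) * (M$2)^2" using assms(2) by simp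
  then show "- cA a / 3 \<le> M$3" using assms(1) unfolding curveC_def by simp
  show "M$3 \<le> top_height a K"
    using assms by (intro le_top_height[of a "M$1" "M$2"]) (auto simp: curveC_def)
qed

lemma curveC_off_axis:
  assumes "M \<in> curveC a K" "(cA a)^2 / 9 < K"
  shows "0 < (M$1)^2 + (M$2)^2"
proof (rule ccontr)
  assume "\<not> 0 < (M$1)^2 + (M$2)^2"
  then have "M$1 = 0" "M$2 = 0" by (simp_all add: not_less sum_power2_le_zero_iff)
  with assms(1) have "M$3 = - cA a / 3" "K = (M$3)^2" unfolding curveC_def by auto
  with assms(2) show False by (simp add: power_divide)
qed

lemma curveC_rescaled_off_axis:
  assumes "M \<in> curveC a K" "(cA a)^2 / 9 < K" "0 < lam"
  shows "0 < (lam * M$1)^2 + (M$2)^2"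
  using curveC_off_axis[OF assms(1,2)] assms(3)
  by (cases "M$1 = 0") (auto simp: power_mult_distrib intro: add_pos_nonneg)

lemma curveC_horizontal_bounds:
  assumes "M \<in> curveC a K" "1 \<le> a" "top_height a K \<le> 0"
  shows "K - (cA a)^2 / 9 \<le> (M$1)^2 + (M$2)^2" and "(M$1)^2 + (M$2)^2 \<le> K - (top_height a K)^2"
proof -
  have sphere: "(M$1)^2 + (M$2)^2 = K - (M$3)^2" using assms(1) unfolding curveC_def by simp
  have "(- M$3)^2 \<le> (cA a / 3)^2" "(- top_height a K)^2 \<le> (- M$3)^2"
    using curveC_height[OF assms(1,2)] assms(3) by (intro power_mono; simp)+
  then show "K - (cA a)^2 / 9 \<le> (M$1)^2 + (M$2)^2" "(M$1)^2 + (M$2)^2 \<le> K - (top_height a K)^2"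
    unfolding sphere by (simp_all add: power_divide)
qed

lemma curveC_ray_unique:
  assumes M: "M \<in> curveC a K" and M': "M' \<in> curveC a K" and a: "1 \<le> a" "a \<le> sqrt 3"
    and K: "(cA a)^2 / 9 < K" and \<mu>: "0 < \<mu>" "M'$1 = \<mu> * M$1" "M'$2 = \<mu> * M$2"
  shows "M' = M"
proof -
  define N Q where "N = (M$1)^2 + (M$2)^2" and "Q = a * (M$1)^2 + (1/a) * (M$2)^2"
  define x where "x = \<mu>^2"
  have "0 < N" unfolding N_def by (rule curveC_off_axis[OF M K])
  have "(1/a) * N \<le> Q" "Q \<le> a * N"
    using one_over_mult_le_mult[OF a(1), of "(M$1)^2"] one_over_mult_le_mult[OF a(1), of "(M$2)^2"]
    unfolding N_def Q_def by (simp_all add: algebra_simps)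
  then have "0 < Q" using \<open>0 < N\<close> a(1) by (smt (verit) divide_pos_pos mult_pos_pos)
  have "a * (M'$1)^2 + (1/a) * (M'$2)^2 = x * Q"
    unfolding Q_def x_def \<mu>(2,3) by (simp add: algebra_simps)
  then have height: "M$3 = (Q - cA a) / 3" "M'$3 = (x * Q - cA a) / 3"
    using M M' unfolding Q_def curveC_def by auto
  have "x * N + (M'$3)^2 = N + (M$3)^2"
    using M M' by (auto simp: curveC_def \<mu>(2,3) N_def x_def algebra_simps)
  then have factored: "(x - 1) * (9 * N + Q * ((x + 1) * Q - 2 * cA a)) = 0"
    unfolding height by (simp add: power2_eq_square field_simps)
  have "2 * cA a * Q \<le> 2 * cA a * (a * N)"
    using \<open>Q \<le> a * N\<close> cA_pos[of a] a(1) by (intro mult_left_mono) auto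
  also have "\<dots> = (2 * (a * cA a)) * N" by (simp add: algebra_simps)
  also have "\<dots> \<le> 9 * N"
    using cA_mult_le[OF a] \<open>0 < N\<close> by (intro mult_right_mono) auto
  finally have "2 * cA a * Q \<le> 9 * N" .
  moreover have "0 < (x + 1) * Q^2" using \<open>0 < Q\<close> unfolding x_def by (simp add: add_nonneg_pos)
  ultimately have "0 < 9 * N + Q * ((x + 1) * Q - 2 * cA a)"
    by (simp add: algebra_simps power2_eq_square)
  then have "x = 1" using factored by simp
  then have "\<mu> = 1" using \<mu>(1) unfolding x_def by (simp add: power2_eq_1_iff)
  then show ?thesis using \<mu> height \<open>x = 1\<close> by (simp add: vec_eq_iff forall_3)
qed

section \<open>Angular speed and period\<close>

text \<open>The rotation coefficients M_3/a + 3/2 and a M_3 + 3/2 of the flow in the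
  (M_1, M_2)-plane (M_1' = - (M_3/a + 3/2) M_2, M_2' = (a M_3 + 3/2) M_1), evaluated at the
  south pole M_3 = - cA a / 3.\<close>
definition alpha :: "real \<Rightarrow> real" where
  "alpha a = 3/2 - cA a / (3 * a)"

definition beta :: "real \<Rightarrow> real" where
  "beta a = 3/2 - a * cA a / 3"

lemma alpha_eq: "0 < a \<Longrightarrow> alpha a = 3 * (3 * a^2 - 1) / (8 * a^2)"
  unfolding alpha_def cA_def by (simp add: field_simps power2_eq_square)

lemma beta_eq: "0 < a \<Longrightarrow> beta a = 3 * (3 - a^2) / 8"
  unfolding beta_def cA_def by (simp add: field_simps power2_eq_square)

lemma alpha_pos:
  assumes "1 \<le> a"
  shows "0 < alpha a"
proof -
  have "1 \<le> a^2" using assms by simp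
  then show ?thesis unfolding alpha_eq[OF order_less_le_trans[OF zero_less_one assms]]
    by (intro divide_pos_pos) auto
qed

lemma beta_nonneg: "1 \<le> a \<Longrightarrow> a \<le> sqrt 3 \<Longrightarrow> 0 \<le> beta a"
  using cA_mult_le unfolding beta_def by simp

lemma beta_pos:
  assumes "1 \<le> a" "a < sqrt 3"
  shows "0 < beta a"
proof -
  have "a^2 < (sqrt 3)^2" using assms by (intro power_strict_mono) auto
  then show ?thesis using assms(1) beta_eq[of a] by simp
qed

lemma beta_sqrt3: "beta (sqrt 3) = 0"
  using beta_eq[of "sqrt 3"] by simp

lemma curveC_rotation_coeffs:
  assumes "M \<in> curveC a K" "1 \<le> a"
  defines "N \<equiv> (M$1)^2 + (M$2)^2"
  shows "alpha a \<le> M$3 / a + 3/2" and "M$3 / a + 3/2 \<le> alpha a + N / 3"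
    and "beta a + N / 3 \<le> a * M$3 + 3/2" and "a * M$3 + 3/2 \<le> beta a + a^2 * N / 3"
proof -
  have height: "M$3 = (a * (M$1)^2 + (1/a) * (M$2)^2 - cA a) / 3"
    using assms(1) unfolding curveC_def by simp
  have A: "M$3 / a + 3/2 = alpha a + (M$1)^2 / 3 + (M$2)^2 / (3 * a^2)"
    and B: "a * M$3 + 3/2 = beta a + a^2 * (M$1)^2 / 3 + (M$2)^2 / 3"
    using assms(2) unfolding height alpha_def beta_def by (simp_all add: field_simps power2_eq_square)
  have "1 \<le> a^2" using assms(2) by simp
  then have "(M$2)^2 / (3 * a^2) \<le> (M$2)^2 / 3"
    by (intro divide_left_mono) auto
  moreover have "(M$1)^2 \<le> a^2 * (M$1)^2" "(M$2)^2 \<le> a^2 * (M$2)^2"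
    using mult_right_mono[of 1 "a^2" "(M$1)^2"] mult_right_mono[of 1 "a^2" "(M$2)^2"] \<open>1 \<le> a^2\<close>
    by simp_all
  ultimately
  show "alpha a \<le> M$3 / a + 3/2" "M$3 / a + 3/2 \<le> alpha a + N / 3"
    "beta a + N / 3 \<le> a * M$3 + 3/2" "a * M$3 + 3/2 \<le> beta a + a^2 * N / 3"
    unfolding A B N_def by (simp_all add: field_simps)
qed

text \<open>The angular velocity of the projection (lam M_1, M_2) under the flow (angular_speed_eq),
  written as a weighted mean of the two rotation coefficients rescaled by 1/lam and lam.\<close>
definition angular_speed :: "real \<Rightarrow> real \<Rightarrow> real^3 \<Rightarrow> real" where
  "angular_speed a lam M =
     ((lam * M$1)^2 * ((a * M$3 + 3/2) / lam) + (M$2)^2 * (lam * (M$3 / a + 3/2)))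
     / ((lam * M$1)^2 + (M$2)^2)"

lemma angular_speed_eq:
  assumes "a \<noteq> 0" "lam \<noteq> 0"
  shows "angular_speed a lam M =
    (lam * M$1 * (a * M$1 * M$3 + 3/2 * M$1) - M$2 * (lam * (- (1/a) * M$2 * M$3 - 3/2 * M$2)))
    / ((lam * M$1)^2 + (M$2)^2)"
proof -
  have "(lam * M$1)^2 * ((a * M$3 + 3/2) / lam) + (M$2)^2 * (lam * (M$3 / a + 3/2))
      = lam * M$1 * (a * M$1 * M$3 + 3/2 * M$1) - M$2 * (lam * (- (1/a) * M$2 * M$3 - 3/2 * M$2))"
    using assms by (simp add: field_simps power2_eq_square)
  then show ?thesis unfolding angular_speed_def by simp
qed

definition angular_speed_lower :: "real \<Rightarrow> real \<Rightarrow> real \<Rightarrow> real" where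
  "angular_speed_lower a lam K = min ((beta a + (K - (cA a)^2 / 9) / 3) / lam) (lam * alpha a)"

definition angular_speed_upper :: "real \<Rightarrow> real \<Rightarrow> real \<Rightarrow> real" where
  "angular_speed_upper a lam K =
     max ((beta a + a^2 * (K - (top_height a K)^2) / 3) / lam)
         (lam * (alpha a + (K - (top_height a K)^2) / 3))"

lemma weighted_mean_between:
  fixes p q x y :: real
  assumes "0 \<le> p" "0 \<le> q" "0 < p + q"
  shows "min x y \<le> (p * x + q * y) / (p + q)" and "(p * x + q * y) / (p + q) \<le> max x y"
proof -
  have "p * min x y + q * min x y \<le> p * x + q * y" "p * x + q * y \<le> p * max x y + q * max x y"
    using assms by (intro add_mono mult_left_mono; simp)+
  then show "min x y \<le> (p * x + q * y) / (p + q)" "(p * x + q * y) / (p + q) \<le> max x y"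
    using assms(3) by (simp_all add: field_simps)
qed

lemma angular_speed_bounds:
  assumes M: "M \<in> curveC a K" and "1 \<le> a" "(cA a)^2 / 9 < K" "top_height a K \<le> 0" "0 < lam"
  shows "angular_speed_lower a lam K \<le> angular_speed a lam M"
    and "angular_speed a lam M \<le> angular_speed_upper a lam K"
proof -
  note mean = weighted_mean_between[OF zero_le_power2 zero_le_power2
      curveC_rescaled_off_axis[OF M assms(3,5)]]
  note coeffs = curveC_rotation_coeffs[OF M assms(2)]
  note N = curveC_horizontal_bounds[OF M assms(2,4)]
  have "beta a + (K - (cA a)^2 / 9) / 3 \<le> a * M$3 + 3/2"
    using coeffs(3) N(1) by (simp add: field_simps)
  moreover have "a * M$3 + 3/2 \<le> beta a + a^2 * (K - (top_height a K)^2) / 3"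
    using coeffs(4) mult_left_mono[OF N(2), of "a^2"] by simp
  ultimately have "(beta a + (K - (cA a)^2 / 9) / 3) / lam \<le> (a * M$3 + 3/2) / lam"
    "(a * M$3 + 3/2) / lam \<le> (beta a + a^2 * (K - (top_height a K)^2) / 3) / lam"
    using assms(5) by (simp_all add: divide_right_mono)
  moreover have "M$3 / a + 3/2 \<le> alpha a + (K - (top_height a K)^2) / 3"
    using coeffs(2) N(2) by (simp add: field_simps)
  then have "lam * alpha a \<le> lam * (M$3 / a + 3/2)"
    "lam * (M$3 / a + 3/2) \<le> lam * (alpha a + (K - (top_height a K)^2) / 3)"
    using coeffs(1) assms(5) by simp_all
  ultimately show "angular_speed_lower a lam K \<le> angular_speed a lam M"
    "angular_speed a lam M \<le> angular_speed_upper a lam K"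
    unfolding angular_speed_lower_def angular_speed_upper_def angular_speed_def
    using mean by (smt (verit, best) min.mono max.mono)+
qed

lemma angular_speed_lower_pos:
  assumes "1 \<le> a" "a \<le> sqrt 3" "(cA a)^2 / 9 < K" "0 < lam"
  shows "0 < angular_speed_lower a lam K"
proof -
  have "0 < beta a + (K - (cA a)^2 / 9) / 3"
    using assms(3) beta_nonneg[OF assms(1,2)] by (simp add: field_simps)
  then show ?thesis using assms(4) alpha_pos[OF assms(1)] unfolding angular_speed_lower_def by simp
qed

lemma fieldF_projection_planar_path:
  assumes flow: "\<And>t. (m has_vector_derivative fieldF a (m t)) (at t)"
    and nonvanishing: "\<And>t. 0 < (lam * m t $ 1)^2 + (m t $ 2)^2"
  shows "nonvanishing_planar_path (\<lambda>t. lam * m t $ 1) (\<lambda>t. m t $ 2)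
    (\<lambda>t. lam * (- (1/a) * m t $ 2 * m t $ 3 - 3/2 * m t $ 2)) (\<lambda>t. a * m t $ 1 * m t $ 3 + 3/2 * m t $ 1)"
proof
  note deriv = fieldF_flow_components[OF flow]
  have cont: "continuous_on UNIV (\<lambda>t. m t $ 1)" "continuous_on UNIV (\<lambda>t. m t $ 2)"
    "continuous_on UNIV (\<lambda>t. m t $ 3)"
    by (intro continuous_at_imp_continuous_on ballI DERIV_isCont[OF deriv(1)]
        DERIV_isCont[OF deriv(2)] DERIV_isCont[OF deriv(3)])+
  show "((\<lambda>t. lam * m t $ 1) has_real_derivative lam * (- (1/a) * m t $ 2 * m t $ 3 - 3/2 * m t $ 2))
      (at t)" for t
    by (intro DERIV_cmult deriv(1))
  show "((\<lambda>t. m t $ 2) has_real_derivative a * m t $ 1 * m t $ 3 + 3/2 * m t $ 1) (at t)" for t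
    by (rule deriv(2))
  show "continuous_on UNIV (\<lambda>t. lam * (- (1/a) * m t $ 2 * m t $ 3 - 3/2 * m t $ 2))"
    "continuous_on UNIV (\<lambda>t. a * m t $ 1 * m t $ 3 + 3/2 * m t $ 1)"
    by (intro continuous_intros cont)+
qed (rule nonvanishing)

lemma periodic_sol_period_bounds:
  assumes per: "periodic_sol_on a K m T" and a: "1 \<le> a" "a \<le> sqrt 3"
    and K: "(cA a)^2 / 9 < K" "top_height a K \<le> 0" and lam: "0 < lam"
  shows "2 * pi / angular_speed_upper a lam K \<le> T" and "T \<le> 2 * pi / angular_speed_lower a lam K"
proof -
  have flow: "\<And>t. (m has_vector_derivative fieldF a (m t)) (at t)"
    and "0 < T" "m T = m 0" and first_return: "\<forall>s\<in>{0<..<T}. m s \<noteq> m 0"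
    using per unfolding periodic_sol_on_def by auto
  have on_curve: "m t \<in> curveC a K" for t using periodic_sol_on_curveC[OF per] a(1) by simp
  interpret P: nonvanishing_planar_path "\<lambda>t. lam * m t $ 1" "\<lambda>t. m t $ 2"
    "\<lambda>t. lam * (- (1/a) * m t $ 2 * m t $ 3 - 3/2 * m t $ 2)" "\<lambda>t. a * m t $ 1 * m t $ 3 + 3/2 * m t $ 1"
    by (rule fieldF_projection_planar_path[OF flow curveC_rescaled_off_axis[OF on_curve K(1) lam]])
  have "P.angular_velocity t = angular_speed a lam (m t)" for t
    unfolding P.angular_velocity_def using angular_speed_eq lam a(1) by simp
  then have lo: "angular_speed_lower a lam K \<le> P.angular_velocity t"
    and hi: "P.angular_velocity t \<le> angular_speed_upper a lam K" for t
    using angular_speed_bounds[OF on_curve a(1) K lam] by auto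
  have "0 < angular_speed_lower a lam K" by (rule angular_speed_lower_pos[OF a K(1) lam])
  then have pos: "0 < P.angular_velocity t" for t using lo by (rule less_le_trans)
  have "2 * pi \<le> T * angular_speed_upper a lam K"
    by (rule P.closed_path_time_ge[OF \<open>0 < T\<close> _ _ pos hi]) (use \<open>m T = m 0\<close> in auto)
  moreover have "0 < angular_speed_upper a lam K" using pos[of 0] hi[of 0] by linarith
  ultimately show "2 * pi / angular_speed_upper a lam K \<le> T" by (simp add: divide_le_eq)
  obtain s \<mu> where s: "0 < s" "s \<le> 2 * pi / angular_speed_lower a lam K" "0 < \<mu>"
    and ray: "lam * m s $ 1 = \<mu> * (lam * m 0 $ 1)" "m s $ 2 = \<mu> * m 0 $ 2"
    using P.returns_to_initial_ray[OF \<open>0 < angular_speed_lower a lam K\<close> lo] by blast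
  have "m s = m 0"
    using curveC_ray_unique[OF on_curve[of 0] on_curve[of s] a K(1) s(3)] ray lam by simp
  then have "T \<le> s" using first_return s(1) by (meson greaterThanLessThan_iff not_le)
  then show "T \<le> 2 * pi / angular_speed_lower a lam K" using s(2) by linarith
qed

section \<open>Bounds on the Berry phase\<close>

text \<open>By connectedness from the south pole, D lies strictly below the paraboloid.\<close>
lemma regionD_below_top:
  assumes x: "x \<in> regionD a K" and a: "1 \<le> a" and K: "(cA a)^2 / 9 < K"
  shows "(x$1)^2 + (x$2)^2 + (x$3)^2 = K" and "x$3 \<le> top_height a K"
proof -
  define P where "P y = a * (y$1)^2 + (1/a) * (y$2)^2 - 3 * (y$3) - cA a" for y :: "real^3"
  define pole where "pole = (vector [0, 0, - sqrt K] :: real^3)"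
  define S where "S = sphere (0::real^3) (sqrt K) - curveC a K"
  obtain U where U: "connected U" "U \<subseteq> S" "pole \<in> U" "x \<in> U"
    using x unfolding regionD_def connected_component_def pole_def S_def by blast
  have on_sphere: "(y$1)^2 + (y$2)^2 + (y$3)^2 = K" if "y \<in> S" for y
  proof -
    have "sqrt ((y$1)^2 + (y$2)^2 + (y$3)^2) = sqrt K"
      using that unfolding S_def by (simp add: norm_vec_def L2_set_def sum_3)
    then show ?thesis by simp
  qed
  show "(x$1)^2 + (x$2)^2 + (x$3)^2 = K" using U(2,4) on_sphere by blast
  have P_nonzero: "P y \<noteq> 0" if "y \<in> S" for y
    using that on_sphere[OF that] unfolding S_def curveC_def P_def by auto
  have "cA a / 3 < sqrt K"
    using K cA_pos[of a] a real_less_rsqrt[of "cA a / 3" K] by (simp add: power_divide)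
  then have "0 < P pole" unfolding P_def pole_def by simp
  have "0 < P x"
  proof (rule ccontr)
    assume "\<not> 0 < P x"
    moreover have "continuous_on U P" unfolding P_def by (intro continuous_intros)
    then have "connected (P ` U)" by (rule connected_continuous_image[OF _ U(1)])
    ultimately have "0 \<in> P ` U"
      using connectedD_interval[of "P ` U" "P x" "P pole" 0] U(3,4) \<open>0 < P pole\<close> by auto
    then show False using P_nonzero U(2) by auto
  qed
  then show "x$3 \<le> top_height a K"
    by (intro le_top_height[OF a \<open>(x$1)^2 + (x$2)^2 + (x$3)^2 = K\<close>]) (simp add: P_def)
qed

lemma regionD_area_le:
  assumes a: "1 \<le> a" and K: "(cA a)^2 / 9 < K" "top_height a K \<le> 0"
  shows "sphere_area (sqrt K) (regionD a K) \<le> 2 * pi^2 * sqrt K * sqrt (K - (top_height a K)^2)"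
proof (rule sphere_area_le_near_axis)
  fix x assume x: "x \<in> regionD a K"
  have "(- top_height a K)^2 \<le> (- x$3)^2"
    using regionD_below_top(2)[OF x a K(1)] K(2) by (intro power_mono) auto
  then show "(x$1)^2 + (x$2)^2 \<le> (sqrt (K - (top_height a K)^2))^2"
    using regionD_below_top(1)[OF x a K(1)] horizontal_radius_pos[OF _ K] a by simp
qed (use above_critical_pos[OF K(1)] horizontal_radius_pos[OF _ K] a in auto)

lemma height_integral_bounds:
  assumes per: "periodic_sol_on a K m T" and a: "1 \<le> a"
  defines "I \<equiv> integral {0..T} (\<lambda>t. 3/2 * m t $ 3 + cA a)"
  shows "T * (cA a / 2) \<le> I" and "I \<le> T * (3/2 * top_height a K + cA a)"
proof -
  have flow: "\<And>t. (m has_vector_derivative fieldF a (m t)) (at t)" and "0 < T"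
    using per unfolding periodic_sol_on_def by auto
  have "continuous_on UNIV (\<lambda>t. 3/2 * m t $ 3 + cA a)"
    by (intro continuous_intros continuous_at_imp_continuous_on ballI
        DERIV_isCont[OF fieldF_flow_components(3)[OF flow]])
  then have integrable: "(\<lambda>t. 3/2 * m t $ 3 + cA a) integrable_on {0..T}"
    by (rule integrable_continuous_real[OF continuous_on_subset]) simp
  have height: "cA a / 2 \<le> 3/2 * m t $ 3 + cA a" "3/2 * m t $ 3 + cA a \<le> 3/2 * top_height a K + cA a"
    for t using curveC_height[OF periodic_sol_on_curveC[OF per, of t] a] a by auto
  have "integral {0..T} (\<lambda>_. cA a / 2) \<le> I"
    unfolding I_def by (rule integral_le[OF integrable_const_ivl integrable]) (use height(1) in auto)
  then show "T * (cA a / 2) \<le> I" using \<open>0 < T\<close> by simp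
  have "I \<le> integral {0..T} (\<lambda>_. 3/2 * top_height a K + cA a)"
    unfolding I_def by (rule integral_le[OF integrable integrable_const_ivl]) (use height(2) in auto)
  then show "I \<le> T * (3/2 * top_height a K + cA a)" using \<open>0 < T\<close> by simp
qed

lemma berry_phase_bounds:
  assumes per: "periodic_sol_on a K m T" and a: "1 \<le> a"
    and K: "(cA a)^2 / 9 < K" "top_height a K \<le> 0"
  shows "T * (cA a / (2 * sqrt K)) \<le> berry_phase a K m T"
    and "berry_phase a K m T \<le> T * ((3/2 * top_height a K + cA a) / sqrt K)
           + 2 * pi^2 * sqrt K * sqrt (K - (top_height a K)^2)"
proof -
  define I where "I = integral {0..T} (\<lambda>t. 3/2 * m t $ 3 + cA a)"
  note integral = height_integral_bounds[OF per a, folded I_def]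
  have "0 < sqrt K" using above_critical_pos[OF K(1)] by simp
  have "T * (cA a / 2) / sqrt K \<le> I / sqrt K"
    by (rule divide_right_mono[OF integral(1)]) (use \<open>0 < sqrt K\<close> in simp)
  moreover have "I / sqrt K \<le> T * (3/2 * top_height a K + cA a) / sqrt K"
    by (rule divide_right_mono[OF integral(2)]) (use \<open>0 < sqrt K\<close> in simp)
  moreover have "berry_phase a K m T = I / sqrt K + sphere_area (sqrt K) (regionD a K)"
    unfolding berry_phase_def I_def by simp
  ultimately show "T * (cA a / (2 * sqrt K)) \<le> berry_phase a K m T"
    and "berry_phase a K m T \<le> T * ((3/2 * top_height a K + cA a) / sqrt K)
           + 2 * pi^2 * sqrt K * sqrt (K - (top_height a K)^2)"
    using sphere_area_nonneg[of "sqrt K" "regionD a K"] regionD_area_le[OF a K] by simp_all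
qed

section \<open>The limit\<close>

definition pole_scale :: "real \<Rightarrow> real" where
  "pole_scale a = sqrt (beta a / alpha a)"

definition pole_frequency :: "real \<Rightarrow> real" where
  "pole_frequency a = sqrt (alpha a * beta a)"

lemma pole_scale_balances:
  assumes "1 \<le> a" "a < sqrt 3"
  shows "0 < pole_scale a" and "0 < pole_frequency a"
    and "beta a / pole_scale a = pole_frequency a" and "pole_scale a * alpha a = pole_frequency a"
proof -
  have \<alpha>: "0 < alpha a" and \<beta>: "0 < beta a" using alpha_pos beta_pos assms by auto
  then show "0 < pole_scale a" "0 < pole_frequency a"
    unfolding pole_scale_def pole_frequency_def by simp_all
  have "pole_frequency a * pole_scale a = sqrt ((beta a)^2)"
    unfolding pole_frequency_def pole_scale_def real_sqrt_mult[symmetric]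
    using \<alpha> by (simp add: power2_eq_square)
  then show "beta a / pole_scale a = pole_frequency a"
    using \<beta> \<open>0 < pole_scale a\<close> by (simp add: field_simps)
  have "pole_scale a * sqrt ((alpha a)^2) = pole_frequency a"
    unfolding pole_frequency_def pole_scale_def real_sqrt_mult[symmetric]
    using \<alpha> by (simp add: power2_eq_square field_simps)
  then show "pole_scale a * alpha a = pole_frequency a" using \<alpha> by simp
qed

lemma pole_frequency_eq:
  assumes "1 \<le> a" "a < sqrt 3"
  shows "3 * pi / pole_frequency a = 8 * a * pi / (sqrt (3 - a^2) * sqrt (3 * a^2 - 1))"
proof -
  have "0 < a" using assms(1) by simp
  then have "alpha a * beta a = (3 / (8 * a))^2 * ((3 - a^2) * (3 * a^2 - 1))"
    unfolding alpha_eq[OF \<open>0 < a\<close>] beta_eq[OF \<open>0 < a\<close>] by (simp add: field_simps power2_eq_square)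
  then have frequency: "pole_frequency a = 3 / (8 * a) * (sqrt (3 - a^2) * sqrt (3 * a^2 - 1))"
    unfolding pole_frequency_def using assms(1) by (simp add: real_sqrt_mult)
  have "0 < sqrt (3 - a^2) * sqrt (3 * a^2 - 1)"
    using beta_pos[OF assms] alpha_pos[OF assms(1)] assms(1) alpha_eq[of a] beta_eq[of a]
    by (simp add: zero_less_divide_iff)
  then show ?thesis unfolding frequency using \<open>0 < a\<close> by (simp add: field_simps)
qed

lemma angular_speed_lower_ge_pole_frequency:
  assumes "1 \<le> a" "a < sqrt 3" "(cA a)^2 / 9 < K"
  shows "pole_frequency a \<le> angular_speed_lower a (pole_scale a) K"
proof -
  note balance = pole_scale_balances[OF assms(1,2)]
  have "beta a / pole_scale a \<le> (beta a + (K - (cA a)^2 / 9) / 3) / pole_scale a"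
    using assms(3) balance(1) by (intro divide_right_mono) auto
  then show ?thesis unfolding angular_speed_lower_def balance(3,4) by simp
qed

lemma critical_level_limits:
  assumes "1 \<le> a" "a \<le> sqrt 3"
  shows "\<forall>\<^sub>F K in at_right ((cA a)^2 / 9). (cA a)^2 / 9 < K \<and> top_height a K \<le> 0"
    and "((\<lambda>K. K - (top_height a K)^2) \<longlongrightarrow> 0) (at_right ((cA a)^2 / 9))"
    and "((\<lambda>K. sqrt K) \<longlongrightarrow> cA a / 3) (at_right ((cA a)^2 / 9))"
proof -
  have "0 < a" "0 < cA a" using assms(1) cA_pos[of a] by auto
  note top = top_height_tendsto[OF \<open>0 < a\<close> cA_mult_le[OF assms]]
  have "\<forall>\<^sub>F K in at_right ((cA a)^2 / 9). top_height a K < 0"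
    using order_tendstoD(2)[OF top] \<open>0 < cA a\<close> by simp
  then show "\<forall>\<^sub>F K in at_right ((cA a)^2 / 9). (cA a)^2 / 9 < K \<and> top_height a K \<le> 0"
    using eventually_at_right_less by eventually_elim auto
  have "((\<lambda>K. K - (top_height a K)^2) \<longlongrightarrow> (cA a)^2 / 9 - (- cA a / 3)^2) (at_right ((cA a)^2 / 9))"
    by (intro tendsto_intros top)
  then show "((\<lambda>K. K - (top_height a K)^2) \<longlongrightarrow> 0) (at_right ((cA a)^2 / 9))"
    by (simp add: power_divide)
  have "((\<lambda>K. sqrt K) \<longlongrightarrow> sqrt ((cA a)^2 / 9)) (at_right ((cA a)^2 / 9))"
    by (intro tendsto_intros)
  then show "((\<lambda>K. sqrt K) \<longlongrightarrow> cA a / 3) (at_right ((cA a)^2 / 9))"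
    using \<open>0 < cA a\<close> by (simp add: real_sqrt_divide)
qed

lemma angular_speed_upper_tendsto:
  assumes "1 \<le> a" "a < sqrt 3"
  shows "(angular_speed_upper a (pole_scale a) \<longlongrightarrow> pole_frequency a) (at_right ((cA a)^2 / 9))"
proof -
  note balance = pole_scale_balances[OF assms]
  have "(angular_speed_upper a (pole_scale a) \<longlongrightarrow>
      max ((beta a + a^2 * 0 / 3) / pole_scale a) (pole_scale a * (alpha a + 0 / 3)))
      (at_right ((cA a)^2 / 9))"
    unfolding angular_speed_upper_def using balance(1)
    by (intro tendsto_intros critical_level_limits(2)[OF assms(1) less_imp_le[OF assms(2)]])
      simp_all
  then show ?thesis using balance(3,4) by simp
qed

lemma berry_phase_between:
  assumes per: "periodic_sol_on a K m T" and a: "1 \<le> a" "a < sqrt 3"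
    and K: "(cA a)^2 / 9 < K" "top_height a K \<le> 0"
  shows "2 * pi / angular_speed_upper a (pole_scale a) K * (cA a / (2 * sqrt K)) \<le> berry_phase a K m T"
    and "berry_phase a K m T \<le> 2 * pi / pole_frequency a * ((3/2 * top_height a K + cA a) / sqrt K)
           + 2 * pi^2 * sqrt K * sqrt (K - (top_height a K)^2)"
proof -
  note period = periodic_sol_period_bounds[OF per a(1) less_imp_le[OF a(2)] K
      pole_scale_balances(1)[OF a]]
  note berry = berry_phase_bounds[OF per a(1) K]
  have "0 < sqrt K" using above_critical_pos[OF K(1)] by simp
  then have "0 \<le> cA a / (2 * sqrt K)" "0 \<le> (3/2 * top_height a K + cA a) / sqrt K"
    using cA_pos[of a] top_height_gt[of a K] K(1) a(1) by (auto intro!: divide_nonneg_nonneg)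
  have "2 * pi / angular_speed_lower a (pole_scale a) K \<le> 2 * pi / pole_frequency a"
    using angular_speed_lower_ge_pole_frequency[OF a K(1)] pole_scale_balances(2)[OF a]
    by (intro divide_left_mono) auto
  then have "T \<le> 2 * pi / pole_frequency a" using period(2) by linarith
  have "2 * pi / angular_speed_upper a (pole_scale a) K * (cA a / (2 * sqrt K))
      \<le> T * (cA a / (2 * sqrt K))"
    by (rule mult_right_mono[OF period(1)]) fact
  then show "2 * pi / angular_speed_upper a (pole_scale a) K * (cA a / (2 * sqrt K)) \<le> berry_phase a K m T"
    using berry(1) by linarith
  have "T * ((3/2 * top_height a K + cA a) / sqrt K)
      \<le> 2 * pi / pole_frequency a * ((3/2 * top_height a K + cA a) / sqrt K)"
    by (rule mult_right_mono) fact+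
  then show "berry_phase a K m T \<le> 2 * pi / pole_frequency a * ((3/2 * top_height a K + cA a) / sqrt K)
           + 2 * pi^2 * sqrt K * sqrt (K - (top_height a K)^2)"
    using berry(2) by linarith
qed

lemma berry_phase_tendsto:
  assumes a: "1 \<le> a" "a < sqrt 3"
    and per: "\<And>K. (cA a)^2 / 9 < K \<Longrightarrow> periodic_sol_on a K (M K) (T K)"
  shows "((\<lambda>K. berry_phase a K (M K) (T K)) \<longlongrightarrow> 3 * pi / pole_frequency a)
           (at_right ((cA a)^2 / 9))"
proof -
  define F where "F = at_right ((cA a)^2 / 9)"
  define \<omega> where "\<omega> = pole_frequency a"
  define lower where
    "lower K = 2 * pi / angular_speed_upper a (pole_scale a) K * (cA a / (2 * sqrt K))" for K
  define upper where "upper K = 2 * pi / \<omega> * ((3/2 * top_height a K + cA a) / sqrt K)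
    + 2 * pi^2 * sqrt K * sqrt (K - (top_height a K)^2)" for K
  have "0 < \<omega>" "0 < cA a" using pole_scale_balances[OF a] a(1) cA_pos[of a] by (auto simp: \<omega>_def)
  note limits = critical_level_limits[OF a(1) less_imp_le[OF a(2)], folded F_def]
  have between: "\<forall>\<^sub>F K in F.
      lower K \<le> berry_phase a K (M K) (T K) \<and> berry_phase a K (M K) (T K) \<le> upper K"
    using limits(1) by eventually_elim
      (use berry_phase_between[OF per a] in \<open>auto simp: lower_def upper_def \<omega>_def\<close>)
  have "(lower \<longlongrightarrow> 2 * pi / \<omega> * (cA a / (2 * (cA a / 3)))) F"
    unfolding lower_def \<omega>_def
    by (intro tendsto_intros angular_speed_upper_tendsto[OF a, folded F_def] limits(3))
      (use \<open>0 < \<omega>\<close> \<open>0 < cA a\<close> in \<open>auto simp: \<omega>_def\<close>)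
  moreover have "(upper \<longlongrightarrow> 2 * pi / \<omega> * ((3/2 * (- cA a / 3) + cA a) / (cA a / 3))
      + 2 * pi^2 * (cA a / 3) * sqrt 0) F"
    unfolding upper_def
    by (intro tendsto_intros limits(2,3) top_height_tendsto[of a, folded F_def] cA_mult_le a
        less_imp_le[OF a(2)]) (use \<open>0 < cA a\<close> a(1) in auto)
  moreover have "2 * pi / \<omega> * (cA a / (2 * (cA a / 3))) = 3 * pi / \<omega>"
    and "2 * pi / \<omega> * ((3/2 * (- cA a / 3) + cA a) / (cA a / 3)) + 2 * pi^2 * (cA a / 3) * sqrt 0
      = 3 * pi / \<omega>"
    using \<open>0 < cA a\<close> by (simp_all add: field_simps)
  ultimately have "(lower \<longlongrightarrow> 3 * pi / \<omega>) F" "(upper \<longlongrightarrow> 3 * pi / \<omega>) F"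
    by (simp_all only:)
  then show ?thesis
    unfolding F_def[symmetric] \<omega>_def[symmetric]
    by (rule tendsto_sandwich[rotated 2]) (use between in \<open>auto elim: eventually_mono\<close>)
qed

lemma angular_speed_upper_at_sqrt3:
  assumes "0 < K - (top_height (sqrt 3) K)^2"
  defines "\<rho> \<equiv> K - (top_height (sqrt 3) K)^2"
  shows "angular_speed_upper (sqrt 3) (sqrt \<rho>) K = sqrt \<rho> * max 1 (alpha (sqrt 3) + \<rho> / 3)"
proof -
  have "0 < \<rho>" using assms(1) unfolding \<rho>_def .
  then have "\<rho> / sqrt \<rho> = sqrt \<rho>" by (simp add: real_div_sqrt)
  with \<open>0 < \<rho>\<close> show ?thesis
    unfolding angular_speed_upper_def beta_sqrt3 \<rho>_def[symmetric] by (simp add: max_mult_distrib_left)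
qed

text \<open>For a = sqrt 3 no fixed scale lam works since beta vanishes; the scale
  lam = sqrt (K - top^2) makes the bound on the angular speed tend to 0.\<close>
lemma berry_phase_ge_at_sqrt3:
  assumes per: "periodic_sol_on (sqrt 3) K m T"
    and K: "(cA (sqrt 3))^2 / 9 < K" "top_height (sqrt 3) K \<le> 0"
  defines "\<rho> \<equiv> K - (top_height (sqrt 3) K)^2"
  shows "0 < sqrt \<rho> * max 1 (alpha (sqrt 3) + \<rho> / 3)"
    and "pi * cA (sqrt 3) / sqrt K * inverse (sqrt \<rho> * max 1 (alpha (sqrt 3) + \<rho> / 3))
           \<le> berry_phase (sqrt 3) K m T"
proof -
  have "0 < \<rho>" unfolding \<rho>_def using horizontal_radius_pos[OF _ K] by simp
  then have upper: "angular_speed_upper (sqrt 3) (sqrt \<rho>) K = sqrt \<rho> * max 1 (alpha (sqrt 3) + \<rho> / 3)"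
    unfolding \<rho>_def by (rule angular_speed_upper_at_sqrt3)
  show pos: "0 < sqrt \<rho> * max 1 (alpha (sqrt 3) + \<rho> / 3)" using \<open>0 < \<rho>\<close> by simp
  have "0 < sqrt K" "0 < cA (sqrt 3)" using above_critical_pos[OF K(1)] cA_pos[of "sqrt 3"] by simp_all
  then have "pi * cA (sqrt 3) / sqrt K * inverse (sqrt \<rho> * max 1 (alpha (sqrt 3) + \<rho> / 3))
      = 2 * pi / angular_speed_upper (sqrt 3) (sqrt \<rho>) K * (cA (sqrt 3) / (2 * sqrt K))"
    unfolding upper using pos by (simp add: field_simps)
  also have "\<dots> \<le> T * (cA (sqrt 3) / (2 * sqrt K))"
    using periodic_sol_period_bounds(1)[OF per _ _ K] \<open>0 < \<rho>\<close> \<open>0 < sqrt K\<close> \<open>0 < cA (sqrt 3)\<close>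
    by (intro mult_right_mono) auto
  also have "\<dots> \<le> berry_phase (sqrt 3) K m T"
    using berry_phase_bounds(1)[OF per _ K] by simp
  finally show "pi * cA (sqrt 3) / sqrt K * inverse (sqrt \<rho> * max 1 (alpha (sqrt 3) + \<rho> / 3))
      \<le> berry_phase (sqrt 3) K m T" .
qed

lemma berry_phase_at_top:
  assumes per: "\<And>K. (cA (sqrt 3))^2 / 9 < K \<Longrightarrow> periodic_sol_on (sqrt 3) K (M K) (T K)"
  shows "filterlim (\<lambda>K. berry_phase (sqrt 3) K (M K) (T K)) at_top (at_right ((cA (sqrt 3))^2 / 9))"
proof -
  define F where "F = at_right ((cA (sqrt 3))^2 / 9)"
  define hi where "hi K = sqrt (K - (top_height (sqrt 3) K)^2)
    * max 1 (alpha (sqrt 3) + (K - (top_height (sqrt 3) K)^2) / 3)" for K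
  have "0 < cA (sqrt 3)" using cA_pos[of "sqrt 3"] by simp
  note limits = critical_level_limits[of "sqrt 3", simplified, folded F_def]
  have bound: "\<forall>\<^sub>F K in F. 0 < hi K \<and> pi * cA (sqrt 3) / sqrt K * inverse (hi K)
      \<le> berry_phase (sqrt 3) K (M K) (T K)"
    using limits(1) by eventually_elim (use berry_phase_ge_at_sqrt3[OF per] in \<open>auto simp: hi_def\<close>)
  have "(hi \<longlongrightarrow> sqrt 0 * max 1 (alpha (sqrt 3) + 0 / 3)) F"
    unfolding hi_def by (intro tendsto_intros limits(2)) simp
  then have inverse_hi: "filterlim (\<lambda>K. inverse (hi K)) at_top F"
    by (intro filterlim_inverse_at_top) (use bound in \<open>auto elim: eventually_mono\<close>)
  have "((\<lambda>K. pi * cA (sqrt 3) / sqrt K) \<longlongrightarrow> pi * cA (sqrt 3) / (cA (sqrt 3) / 3)) F"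
    by (intro tendsto_intros limits(3)) (use \<open>0 < cA (sqrt 3)\<close> in auto)
  then have "filterlim (\<lambda>K. pi * cA (sqrt 3) / sqrt K * inverse (hi K)) at_top F"
    by (rule filterlim_tendsto_pos_mult_at_top[OF _ _ inverse_hi]) (use \<open>0 < cA (sqrt 3)\<close> in simp)
  then show ?thesis
    unfolding F_def[symmetric]
    by (rule filterlim_at_top_mono) (use bound in \<open>auto elim: eventually_mono\<close>)
qed

theorem mainTheorem8:
  fixes a :: real and M :: "real \<Rightarrow> real \<Rightarrow> real^3" and T :: "real \<Rightarrow> real"
  assumes "1 \<le> a" and "a \<le> sqrt 3"
    and "\<And>K. K > (cA a)^2 / 9 \<Longrightarrow> periodic_sol_on a K (M K) (T K)"
  shows "(a < sqrt 3 \<longrightarrow>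
            ((\<lambda>K. berry_phase a K (M K) (T K))
               \<longlongrightarrow> 8 * a * pi / (sqrt (3 - a^2) * sqrt (3 * a^2 - 1)))
            (at_right ((cA a)^2 / 9)))
       \<and> (a = sqrt 3 \<longrightarrow>
            filterlim (\<lambda>K. berry_phase a K (M K) (T K)) at_top (at_right ((cA a)^2 / 9)))"
  using berry_phase_tendsto[OF assms(1) _ assms(3)] pole_frequency_eq[OF assms(1)]
    berry_phase_at_top[of M T] assms(3)
  by auto

end
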